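(* Let $R,S$ be commutative rings with nonzero identity, $\delta$ an expansion of ideals of $R$, $\gamma$ an expansion of ideals of $S$, and $f:R\to S$ a $\delta\gamma$-homomorphism. Then: (1) If $f$ is a monomorphism and $J$ is a $\gamma$-$n$-ideal of $S$, then $f^{-1}(J)$ is a $\delta$-$n$-ideal of $R$. (2) If $f$ is an epimorphism and $I$ is a proper ideal of $R$ with $\ker(f)\subseteq I$ which is a $\delta$-$n$-ideal of $R$, then $f(I)$ is a $\gamma$-$n$-ideal of $S$.
   Context: An expansion of ideals of a ring $R$ is a map $\delta$ from the set of ideals of $R$ to itself such that $I\subseteq\delta(I)$ for every ideal $I$, and $\delta(I)\subseteq\delta(J)$ whenever $I\subseteq J$. $\sqrt{0}$ denotes the nilradical of the ring in question. Given an expansion $\delta$ of ideals of a ring $R$, a proper ideal $I$ of $R$ is a $\delta$-$n$-ideal if whenever $a,b\in R$ with $ab\in I$ and $a\notin\sqrt{0_R}$, then $b\in\delta(I)$. A ring homomorphism $f:R\to S$ is a $\delta\gamma$-homomorphism if $\delta(f^{-1}(J))=f^{-1}(\gamma(J))$ for every ideal $J$ of $S$. *)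

theory Defs
  imports "HOL-Algebra.Algebra"
begin

definition nilradical :: "('a, 'm) ring_scheme \<Rightarrow> 'a set" where
  "nilradical R = {a \<in> carrier R. \<exists>n::nat. a [^]\<^bsub>R\<^esub> n = \<zero>\<^bsub>R\<^esub>}"

definition expansion :: "('a, 'm) ring_scheme \<Rightarrow> ('a set \<Rightarrow> 'a set) \<Rightarrow> bool" where
  "expansion R \<delta> \<longleftrightarrow>
     (\<forall>I. ideal I R \<longrightarrow> ideal (\<delta> I) R \<and> I \<subseteq> \<delta> I) \<and>
     (\<forall>I J. ideal I R \<longrightarrow> ideal J R \<longrightarrow> I \<subseteq> J \<longrightarrow> \<delta> I \<subseteq> \<delta> J)"

definition delta_n_ideal :: "('a, 'm) ring_scheme \<Rightarrow> ('a set \<Rightarrow> 'a set) \<Rightarrow> 'a set \<Rightarrow> bool" where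
  "delta_n_ideal R \<delta> I \<longleftrightarrow> ideal I R \<and> I \<noteq> carrier R \<and>
     (\<forall>a \<in> carrier R. \<forall>b \<in> carrier R.
        a \<otimes>\<^bsub>R\<^esub> b \<in> I \<longrightarrow> a \<notin> nilradical R \<longrightarrow> b \<in> \<delta> I)"

definition dg_hom :: "('a, 'm) ring_scheme \<Rightarrow> ('b, 'n) ring_scheme \<Rightarrow>
    ('a set \<Rightarrow> 'a set) \<Rightarrow> ('b set \<Rightarrow> 'b set) \<Rightarrow> ('a \<Rightarrow> 'b) \<Rightarrow> bool" where
  "dg_hom R S \<delta> \<gamma> f \<longleftrightarrow> f \<in> ring_hom R S \<and>
     (\<forall>J. ideal J S \<longrightarrow> \<delta> (f -` J \<inter> carrier R) = f -` (\<gamma> J) \<inter> carrier R)"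

end

theory Submission
  imports Defs
begin

text \<open>Ring homomorphisms map nilpotents to nilpotents, and injective ones also reflect them.
  For (1), if \<open>a b \<in> f\<inverse>(J)\<close> with \<open>a\<close> not nilpotent, then \<open>f a f b \<in> J\<close> with \<open>f a\<close> not nilpotent,
  so \<open>f b \<in> \<gamma>(J)\<close>, i.e. \<open>b \<in> f\<inverse>(\<gamma> J) = \<delta>(f\<inverse> J)\<close>. For (2), \<open>ker f \<subseteq> I\<close> gives
  \<open>f\<inverse>(f I) = I\<close>; surjectivity lets us lift \<open>a' b' \<in> f(I)\<close> to \<open>a b \<in> I\<close>, and then
  \<open>b \<in> \<delta>(I) = \<delta>(f\<inverse>(f I)) = f\<inverse>(\<gamma>(f I))\<close>.\<close>

lemma (in ring_hom_ring) hom_nilradical: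
  assumes "a \<in> nilradical R"
  shows "h a \<in> nilradical S"
proof -
  obtain n :: nat where "a \<in> carrier R" "a [^] n = \<zero>"
    using assms unfolding nilradical_def by auto
  then have "h a [^]\<^bsub>S\<^esub> n = \<zero>\<^bsub>S\<^esub>"
    by (metis hom_nat_pow hom_zero)
  with \<open>a \<in> carrier R\<close> show ?thesis
    unfolding nilradical_def by auto
qed

lemma (in ring_hom_ring) nilradical_vimage_inj:
  assumes inj: "inj_on h (carrier R)" and a: "a \<in> carrier R" and "h a \<in> nilradical S"
  shows "a \<in> nilradical R"
proof -
  obtain n :: nat where "h a [^]\<^bsub>S\<^esub> n = \<zero>\<^bsub>S\<^esub>"
    using assms unfolding nilradical_def by auto
  then have "h (a [^] n) = h \<zero>"
    using a by (simp add: hom_nat_pow)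
  then have "a [^] n = \<zero>"
    by (rule inj_onD[OF inj]) (simp_all add: a)
  with a show ?thesis
    unfolding nilradical_def by auto
qed

lemma (in ring_hom_ring) ideal_vimage_proper:
  assumes "ideal J S" and "J \<noteq> carrier S"
  shows "h -` J \<inter> carrier R \<noteq> carrier R"
proof
  assume "h -` J \<inter> carrier R = carrier R"
  then have "\<one>\<^bsub>S\<^esub> \<in> J"
    by (metis IntE R.one_closed hom_one vimageE)
  with assms show False
    using ideal.one_imp_carrier by blast
qed

lemma (in ring_hom_ring) ideal_image_surj:
  assumes surj: "h ` carrier R = carrier S" and I: "ideal I R"
  shows "ideal (h ` I) S"
proof -
  interpret I: ideal I R by fact
  have lift: "\<exists>i y. i \<in> I \<and> y \<in> carrier R \<and> a = h i \<and> x = h y"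
    if "a \<in> h ` I" "x \<in> carrier S" for a x
    using that surj by (metis imageE)
  show ?thesis
  proof (rule idealI)
    show "ring S" ..
    show "subgroup (h ` I) (add_monoid S)"
      by (rule group_hom.subgroup_img_is_subgroup[OF a_group_hom I.a_subgroup])
  next
    fix a x assume "a \<in> h ` I" "x \<in> carrier S"
    then obtain i y where "i \<in> I" "y \<in> carrier R" "a = h i" "x = h y"
      using lift by blast
    then show "x \<otimes>\<^bsub>S\<^esub> a \<in> h ` I"
      by (metis I.I_l_closed I.Icarr hom_mult imageI)
  next
    fix a x assume "a \<in> h ` I" "x \<in> carrier S"
    then obtain i y where "i \<in> I" "y \<in> carrier R" "a = h i" "x = h y"
      using lift by blast
    then show "a \<otimes>\<^bsub>S\<^esub> x \<in> h ` I"
      by (metis I.I_r_closed I.Icarr hom_mult imageI)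
  qed
qed

lemma (in ring_hom_ring) vimage_image_ideal:
  assumes I: "ideal I R" and ker: "a_kernel R S h \<subseteq> I"
  shows "h -` (h ` I) \<inter> carrier R = I"
proof -
  interpret I: ideal I R by fact
  have "x \<in> I" if x: "x \<in> carrier R" and i: "i \<in> I" "h x = h i" for x i
  proof -
    have "x \<in> a_kernel R S h +> i"
      using x i I.Icarr by (intro homeq_imp_rcos) auto
    then obtain k where "k \<in> a_kernel R S h" "x = k \<oplus> i"
      unfolding a_r_coset_def' by blast
    with ker i show ?thesis
      using I.a_closed by blast
  qed
  then show ?thesis
    using I.Icarr by blast
qed

lemma (in ring_hom_ring) delta_n_ideal_vimage:
  assumes inj: "inj_on h (carrier R)" and dg: "dg_hom R S \<delta> \<gamma> h"
    and J: "delta_n_ideal S \<gamma> J"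
  shows "delta_n_ideal R \<delta> (h -` J \<inter> carrier R)"
proof -
  have idJ: "ideal J S" and propJ: "J \<noteq> carrier S"
    and nJ: "\<And>a b. \<lbrakk>a \<in> carrier S; b \<in> carrier S; a \<otimes>\<^bsub>S\<^esub> b \<in> J; a \<notin> nilradical S\<rbrakk>
               \<Longrightarrow> b \<in> \<gamma> J"
    using J unfolding delta_n_ideal_def by auto
  have "ideal (h -` J \<inter> carrier R) R"
    using ideal_vimage[OF idJ] by (simp add: Int_def conj_commute)
  moreover have "b \<in> \<delta> (h -` J \<inter> carrier R)"
    if "a \<in> carrier R" "b \<in> carrier R" "a \<otimes> b \<in> h -` J \<inter> carrier R" "a \<notin> nilradical R"
    for a b
  proof -
    have "h b \<in> \<gamma> J"
      using nJ[of "h a" "h b"] that nilradical_vimage_inj[OF inj] by auto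
    then show ?thesis
      using dg idJ \<open>b \<in> carrier R\<close> unfolding dg_hom_def by auto
  qed
  ultimately show ?thesis
    unfolding delta_n_ideal_def using ideal_vimage_proper[OF idJ propJ] by blast
qed

lemma (in ring_hom_ring) delta_n_ideal_image:
  assumes surj: "h ` carrier R = carrier S" and dg: "dg_hom R S \<delta> \<gamma> h"
    and ker: "a_kernel R S h \<subseteq> I" and I: "delta_n_ideal R \<delta> I"
  shows "delta_n_ideal S \<gamma> (h ` I)"
proof -
  have idI: "ideal I R" and propI: "I \<noteq> carrier R"
    and nI: "\<And>a b. \<lbrakk>a \<in> carrier R; b \<in> carrier R; a \<otimes> b \<in> I; a \<notin> nilradical R\<rbrakk>
               \<Longrightarrow> b \<in> \<delta> I"
    using I unfolding delta_n_ideal_def by auto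
  have idhI: "ideal (h ` I) S"
    by (rule ideal_image_surj[OF surj idI])
  have vimage_image: "h -` (h ` I) \<inter> carrier R = I"
    by (rule vimage_image_ideal[OF idI ker])
  have "h ` I \<noteq> carrier S"
  proof
    assume "h ` I = carrier S"
    then have "h -` (h ` I) \<inter> carrier R = carrier R"
      by auto
    with vimage_image propI show False
      by simp
  qed
  moreover have "b' \<in> \<gamma> (h ` I)"
    if a': "a' \<in> carrier S" and b': "b' \<in> carrier S"
      and prod: "a' \<otimes>\<^bsub>S\<^esub> b' \<in> h ` I" and not_nil: "a' \<notin> nilradical S"
    for a' b'
  proof -
    obtain a b where a: "a \<in> carrier R" "a' = h a" and b: "b \<in> carrier R" "b' = h b"
      using a' b' surj by (metis imageE)
    have "a \<otimes> b \<in> h -` (h ` I) \<inter> carrier R"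
      using prod a b by simp
    moreover have "a \<notin> nilradical R"
      using not_nil a hom_nilradical by blast
    ultimately have "b \<in> \<delta> (h -` (h ` I) \<inter> carrier R)"
      using nI a b vimage_image by simp
    then show ?thesis
      using dg idhI b unfolding dg_hom_def by simp
  qed
  ultimately show ?thesis
    unfolding delta_n_ideal_def using idhI by blast
qed

theorem proposition2p20:
  fixes R :: "('a, 'm) ring_scheme" and S :: "('b, 'n) ring_scheme"
    and \<delta> :: "'a set \<Rightarrow> 'a set" and \<gamma> :: "'b set \<Rightarrow> 'b set" and f :: "'a \<Rightarrow> 'b"
  assumes "cring R" and "cring S"
    and "\<one>\<^bsub>R\<^esub> \<noteq> \<zero>\<^bsub>R\<^esub>" and "\<one>\<^bsub>S\<^esub> \<noteq> \<zero>\<^bsub>S\<^esub>"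
    and "expansion R \<delta>" and "expansion S \<gamma>"
    and "dg_hom R S \<delta> \<gamma> f"
  shows "(\<forall>J. inj_on f (carrier R) \<longrightarrow> delta_n_ideal S \<gamma> J \<longrightarrow>
            delta_n_ideal R \<delta> (f -` J \<inter> carrier R))
       \<and> (\<forall>I. f ` carrier R = carrier S \<longrightarrow> ideal I R \<longrightarrow> I \<noteq> carrier R \<longrightarrow>
            a_kernel R S f \<subseteq> I \<longrightarrow> delta_n_ideal R \<delta> I \<longrightarrow>
            delta_n_ideal S \<gamma> (f ` I))"
proof -
  interpret R: cring R by fact
  interpret S: cring S by fact
  interpret ring_hom_ring R S f
    using \<open>dg_hom R S \<delta> \<gamma> f\<close> unfolding dg_hom_def
    by (intro ring_hom_ringI2 R.ring_axioms S.ring_axioms) simp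
  show ?thesis
    using \<open>dg_hom R S \<delta> \<gamma> f\<close> by (simp add: delta_n_ideal_vimage delta_n_ideal_image)
qed

end
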